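(* Let $\chi_1,\chi_2,\chi_{1'},\chi_{2'}$ be triples of nonzero complex numbers that are the octahedral colors of the segments $1,2,1',2'$ at a crossing of an octahedral coloring. Then: - $U(\chi_1)U(\chi_2)=U(\chi_{2'})U(\chi_{1'})$; - $D(\chi_1)D(\chi_2)=D(\chi_{2'})D(\chi_{1'})$; - if the crossing is positive, $D(\chi_1)U(\chi_2)=U(\chi_{2'})D(\chi_{1'})$; - if the crossing is negative, $U(\chi_1)D(\chi_2)=D(\chi_{2'})U(\chi_{1'})$. Consequently the assignment $x_i^+\mapsto U(\chi_i)$, $x_i^-\mapsto D(\chi_i)$ gives a well-defined representation (functor) $\mathrm{Hol}_\chi$ of the fundamental groupoid $\Pi(D)$ into $\mathrm{GL}_2(\mathbb{C})$.
   Context: Tangle diagrams and labels: $D$ is an oriented tangle diagram, viewed as a 4-valent graph. Segments are the edges of the graph and regions are the components of the complement. For a segment $i$, $i^{\uparrow}$ and $i^{\downarrow}$ are the regions on the left and right of $i$ respectively, with respect to its orientation. At a crossing, rotated so both strands point right, the incoming segments are $1$ (upper left) and $2$ (lower left), and the outgoing segments are $1'$ (lower right, continuing $1$) and $2'$ (upper right, continuing $2$). The crossing is positive if strand $1\to1'$ is over and negative if strand $2\to2'$ is over. Octahedral coloring: assign to each segment a triple $(a_i,b_i,m_i)$ of nonzero complex numbers with $m_{1'}=m_1$, $m_{2'}=m_2$ at each crossing, and: - at positive crossings, with $A=1-\frac{m_1b_1}{b_2}(1-\frac{a_1}{m_1})(1-\frac{1}{m_2a_2})$: $a_{1'}=a_1A^{-1}$,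 $a_{2'}=a_2A$, $b_{1'}=\frac{m_2b_2}{m_1}(1-m_2a_2(1-\frac{b_2}{m_1b_1}))^{-1}$, $b_{2'}=b_1(1-\frac{m_1}{a_1}(1-\frac{b_2}{m_1b_1}))$; - at negative crossings, with $\tilde A=1-\frac{b_2}{m_1b_1}(1-m_1a_1)(1-\frac{m_2}{a_2})$: $a_{1'}=a_1\tilde A^{-1}$, $a_{2'}=a_2\tilde A$, $b_{1'}=\frac{m_2b_2}{m_1}(1-\frac{a_2}{m_2}(1-\frac{m_1b_1}{b_2}))$, $b_{2'}=b_1(1-\frac{1}{m_1a_1}(1-\frac{m_1b_1}{b_2}))^{-1}$. Matrices: for $\chi=(a,b,m)$, \[ U(\chi)=\begin{bmatrix}a&0\\(a-1/m)/b&1\end{bmatrix},\qquad D(\chi)=\begin{bmatrix}1&(a-m)b\\0&a\end{bmatrix}. \] Products are ordinary matrix products. Fundamental groupoid $\Pi(D)$: objects are the regions of $D$. There are two generating morphisms $x_i^+,x_i^-:i^{\uparrow}\to i^{\downarrow}$ for each segment $i$, representing paths passing over and under the segment respectively. Composition is written left to right ($fg$ means $f$ then $g$). At each crossing there are the relations $x_1^+x_2^+=x_{2'}^+x_{1'}^+$ and $x_1^-x_2^-=x_{2'}^-x_{1'}^-$, together with $x_1^-x_2^+=x_{2'}^+x_{1'}^-$ at a positive crossing, or $x_1^+x_2^-=x_{2'}^-x_{1'}^+$ at a negative crossing. A representation sends a composite $fg$ to the matrix product in the same order. *)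

theory Defs
  imports "HOL-Analysis.Analysis"
begin

type_synonym color = "complex \<times> complex \<times> complex"

definition col_a :: "color \<Rightarrow> complex" where "col_a c = fst c"
definition col_b :: "color \<Rightarrow> complex" where "col_b c = fst (snd c)"
definition col_m :: "color \<Rightarrow> complex" where "col_m c = snd (snd c)"

definition nonzero_color :: "color \<Rightarrow> bool" where
  "nonzero_color c \<longleftrightarrow> col_a c \<noteq> 0 \<and> col_b c \<noteq> 0 \<and> col_m c \<noteq> 0"

definition mat2 :: "complex \<Rightarrow> complex \<Rightarrow> complex \<Rightarrow> complex \<Rightarrow> complex^2^2" where
  "mat2 p q r s = vector [vector [p, q], vector [r, s]]"

definition Umat :: "color \<Rightarrow> complex^2^2" where
  "Umat c = (let a = col_a c; b = col_b c; m = col_m c in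
     mat2 a 0 ((a - 1/m) / b) 1)"

definition Dmat :: "color \<Rightarrow> complex^2^2" where
  "Dmat c = (let a = col_a c; b = col_b c; m = col_m c in
     mat2 1 ((a - m) * b) 0 a)"

text \<open>Octahedral coloring relations at a positive crossing
  (incoming 1, 2; outgoing 1', 2').\<close>
definition pos_crossing_colors :: "color \<Rightarrow> color \<Rightarrow> color \<Rightarrow> color \<Rightarrow> bool" where
  "pos_crossing_colors c1 c2 c1' c2' \<longleftrightarrow>
    (let a1 = col_a c1; b1 = col_b c1; m1 = col_m c1;
         a2 = col_a c2; b2 = col_b c2; m2 = col_m c2;
         A = 1 - (m1 * b1 / b2) * (1 - a1 / m1) * (1 - 1 / (m2 * a2))
     in col_m c1' = m1 \<and> col_m c2' = m2 \<and>
        col_a c1' = a1 * inverse A \<and> col_a c2' = a2 * A \<and>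
        col_b c1' = (m2 * b2 / m1) * inverse (1 - m2 * a2 * (1 - b2 / (m1 * b1))) \<and>
        col_b c2' = b1 * (1 - (m1 / a1) * (1 - b2 / (m1 * b1))))"

definition neg_crossing_colors :: "color \<Rightarrow> color \<Rightarrow> color \<Rightarrow> color \<Rightarrow> bool" where
  "neg_crossing_colors c1 c2 c1' c2' \<longleftrightarrow>
    (let a1 = col_a c1; b1 = col_b c1; m1 = col_m c1;
         a2 = col_a c2; b2 = col_b c2; m2 = col_m c2;
         At = 1 - (b2 / (m1 * b1)) * (1 - m1 * a1) * (1 - m2 / a2)
     in col_m c1' = m1 \<and> col_m c2' = m2 \<and>
        col_a c1' = a1 * inverse At \<and> col_a c2' = a2 * At \<and>
        col_b c1' = (m2 * b2 / m1) * (1 - (a2 / m2) * (1 - m1 * b1 / b2)) \<and>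
        col_b c2' = b1 * inverse (1 - (1 / (m1 * a1)) * (1 - m1 * b1 / b2)))"

end

theory Submission
  imports Defs
begin

text \<open>Once the crossing relations are solved for the outgoing colors, every entry of the four
  matrix identities is a rational function of the incoming colors whose only denominators are
  the color entries and three polynomials \<open>N\<close>, \<open>P\<close>, \<open>Q\<close>; these are nonzero precisely because
  the outgoing colors are. Clearing denominators turns each entry into a polynomial identity.\<close>

lemma color_eq: "c = (col_a c, col_b c, col_m c)"
  by (simp add: col_a_def col_b_def col_m_def)

lemma nonzero_color_triple: "nonzero_color (a, b, m) \<longleftrightarrow> a \<noteq> 0 \<and> b \<noteq> 0 \<and> m \<noteq> 0"
  by (simp add: nonzero_color_def col_a_def col_b_def col_m_def)

lemma mat2_eq_iff:
  "mat2 p q r s = mat2 p' q' r' s' \<longleftrightarrow> p = p' \<and> q = q' \<and> r = r' \<and> s = s'"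
  unfolding mat2_def by (auto simp: vec_eq_iff forall_2 vector_2)

lemma mat2_mult:
  "mat2 p q r s ** mat2 p' q' r' s' =
     mat2 (p * p' + q * r') (p * q' + q * s') (r * p' + s * r') (r * q' + s * s')"
  unfolding mat2_def by (auto simp: vec_eq_iff forall_2 vector_2 matrix_matrix_mult_def sum_2)

lemma det_mat2: "det (mat2 p q r s) = p * s - q * r"
  unfolding mat2_def by (simp add: det_2 vector_2)

lemma Umat_triple: "Umat (a, b, m) = mat2 a 0 ((a - 1 / m) / b) 1"
  by (simp add: Umat_def col_a_def col_b_def col_m_def)

lemma Dmat_triple: "Dmat (a, b, m) = mat2 1 ((a - m) * b) 0 a"
  by (simp add: Dmat_def col_a_def col_b_def col_m_def)

lemma invertible_Umat: "col_a c \<noteq> 0 \<Longrightarrow> invertible (Umat c)"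
  by (simp add: invertible_det_nz Umat_def Let_def det_mat2)

lemma invertible_Dmat: "col_a c \<noteq> 0 \<Longrightarrow> invertible (Dmat c)"
  by (simp add: invertible_det_nz Dmat_def Let_def det_mat2)

lemma pos_crossing_colors_solved:
  fixes a1 b1 m1 a2 b2 m2 :: complex
  defines "N \<equiv> b2 * m2 * a2 - b1 * (m1 - a1) * (m2 * a2 - 1)"
    and "P \<equiv> m1 * b1 - m2 * a2 * (m1 * b1 - b2)"
    and "Q \<equiv> a1 * b1 - m1 * b1 + b2"
  assumes "nonzero_color (a1, b1, m1)" "nonzero_color (a2, b2, m2)"
    and "nonzero_color c1'" "nonzero_color c2'"
    and "pos_crossing_colors (a1, b1, m1) (a2, b2, m2) c1' c2'"
  shows "N \<noteq> 0" "P \<noteq> 0" "Q \<noteq> 0"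
    and "c1' = (a1 * b2 * m2 * a2 / N, m2 * b2 * b1 / P, m1)"
    and "c2' = (N / (b2 * m2), Q / a1, m2)"
proof -
  have nz: "a1 \<noteq> 0" "b1 \<noteq> 0" "m1 \<noteq> 0" "a2 \<noteq> 0" "b2 \<noteq> 0" "m2 \<noteq> 0"
    using assms(4,5) by (simp_all add: nonzero_color_triple)
  have A: "1 - (m1 * b1 / b2) * (1 - a1 / m1) * (1 - 1 / (m2 * a2)) = N / (b2 * m2 * a2)"
    using nz by (simp add: N_def field_simps)
  have b1'_denom: "1 - m2 * a2 * (1 - b2 / (m1 * b1)) = P / (m1 * b1)"
    using nz by (simp add: P_def field_simps)
  have b2'_eq: "b1 * (1 - (m1 / a1) * (1 - b2 / (m1 * b1))) = Q / a1"
    using nz by (simp add: Q_def field_simps)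
  have c1': "c1' = (a1 * inverse (N / (b2 * m2 * a2)), (m2 * b2 / m1) * inverse (P / (m1 * b1)), m1)"
    and c2': "c2' = (a2 * (N / (b2 * m2 * a2)), Q / a1, m2)"
    using assms(8) A b1'_denom b2'_eq
    by (subst color_eq; simp add: pos_crossing_colors_def col_a_def col_b_def col_m_def Let_def)+
  \<comment> \<open>Since \<open>inverse 0 = 0\<close>, only the nonzeroness of the outgoing colors
    excludes \<open>N = 0\<close> and \<open>P = 0\<close>.\<close>
  show "N \<noteq> 0" "P \<noteq> 0" "Q \<noteq> 0"
    using assms(6,7) by (auto simp: c1' c2' nonzero_color_triple)
  then show "c1' = (a1 * b2 * m2 * a2 / N, m2 * b2 * b1 / P, m1)"
    and "c2' = (N / (b2 * m2), Q / a1, m2)"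
    using nz by (simp_all add: c1' c2' field_simps)
qed

lemma pos_crossing_matrix_identities:
  fixes a1 b1 m1 a2 b2 m2 :: complex
  defines "N \<equiv> b2 * m2 * a2 - b1 * (m1 - a1) * (m2 * a2 - 1)"
    and "P \<equiv> m1 * b1 - m2 * a2 * (m1 * b1 - b2)"
    and "Q \<equiv> a1 * b1 - m1 * b1 + b2"
  assumes nonzero: "a1 \<noteq> 0" "b1 \<noteq> 0" "m1 \<noteq> 0" "a2 \<noteq> 0" "b2 \<noteq> 0" "m2 \<noteq> 0"
    and denominators: "N \<noteq> 0" "P \<noteq> 0" "Q \<noteq> 0"
  shows "Umat (a1, b1, m1) ** Umat (a2, b2, m2) =
           Umat (N / (b2 * m2), Q / a1, m2) ** Umat (a1 * b2 * m2 * a2 / N, m2 * b2 * b1 / P, m1)"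
    and "Dmat (a1, b1, m1) ** Dmat (a2, b2, m2) =
           Dmat (N / (b2 * m2), Q / a1, m2) ** Dmat (a1 * b2 * m2 * a2 / N, m2 * b2 * b1 / P, m1)"
    and "Dmat (a1, b1, m1) ** Umat (a2, b2, m2) =
           Umat (N / (b2 * m2), Q / a1, m2) ** Dmat (a1 * b2 * m2 * a2 / N, m2 * b2 * b1 / P, m1)"
  unfolding Umat_triple Dmat_triple mat2_mult mat2_eq_iff
  by (simp_all add: field_simps nonzero denominators) (unfold N_def P_def Q_def; algebra)+

lemma pos_crossing_relations:
  assumes "nonzero_color c1" "nonzero_color c2" "nonzero_color c1'" "nonzero_color c2'"
    and "pos_crossing_colors c1 c2 c1' c2'"
  shows "Umat c1 ** Umat c2 = Umat c2' ** Umat c1'"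
    and "Dmat c1 ** Dmat c2 = Dmat c2' ** Dmat c1'"
    and "Dmat c1 ** Umat c2 = Umat c2' ** Dmat c1'"
proof -
  obtain a1 b1 m1 a2 b2 m2 where c1: "c1 = (a1, b1, m1)" and c2: "c2 = (a2, b2, m2)"
    using prod_cases3 by metis
  note solved = pos_crossing_colors_solved[OF assms[unfolded c1 c2]]
  have "a1 \<noteq> 0" "b1 \<noteq> 0" "m1 \<noteq> 0" "a2 \<noteq> 0" "b2 \<noteq> 0" "m2 \<noteq> 0"
    using assms(1,2) by (simp_all add: c1 c2 nonzero_color_triple)
  from pos_crossing_matrix_identities[OF this solved(1-3)]
  show "Umat c1 ** Umat c2 = Umat c2' ** Umat c1'"
    and "Dmat c1 ** Dmat c2 = Dmat c2' ** Dmat c1'"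
    and "Dmat c1 ** Umat c2 = Umat c2' ** Dmat c1'"
    by (simp_all add: c1 c2 solved(4,5))
qed

lemma neg_crossing_colors_solved:
  fixes a1 b1 m1 a2 b2 m2 :: complex
  defines "N \<equiv> m1 * b1 * a2 - b2 * (1 - m1 * a1) * (a2 - m2)"
    and "P \<equiv> m1 * a1 * b2 - b2 + m1 * b1"
    and "Q \<equiv> m2 * b2 - a2 * (b2 - m1 * b1)"
  assumes "nonzero_color (a1, b1, m1)" "nonzero_color (a2, b2, m2)"
    and "nonzero_color c1'" "nonzero_color c2'"
    and "neg_crossing_colors (a1, b1, m1) (a2, b2, m2) c1' c2'"
  shows "N \<noteq> 0" "P \<noteq> 0" "Q \<noteq> 0"
    and "c1' = (a1 * m1 * b1 * a2 / N, Q / m1, m1)"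
    and "c2' = (N / (m1 * b1), b1 * m1 * a1 * b2 / P, m2)"
proof -
  have nz: "a1 \<noteq> 0" "b1 \<noteq> 0" "m1 \<noteq> 0" "a2 \<noteq> 0" "b2 \<noteq> 0" "m2 \<noteq> 0"
    using assms(4,5) by (simp_all add: nonzero_color_triple)
  have At: "1 - (b2 / (m1 * b1)) * (1 - m1 * a1) * (1 - m2 / a2) = N / (m1 * b1 * a2)"
    using nz by (simp add: N_def field_simps)
  have b2'_denom: "1 - (1 / (m1 * a1)) * (1 - m1 * b1 / b2) = P / (m1 * a1 * b2)"
    using nz by (simp add: P_def field_simps)
  have b1'_eq: "(m2 * b2 / m1) * (1 - (a2 / m2) * (1 - m1 * b1 / b2)) = Q / m1"
    using nz by (simp add: Q_def field_simps)
  have c1': "c1' = (a1 * inverse (N / (m1 * b1 * a2)), Q / m1, m1)"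
    and c2': "c2' = (a2 * (N / (m1 * b1 * a2)), b1 * inverse (P / (m1 * a1 * b2)), m2)"
    using assms(8) At b1'_eq b2'_denom
    by (subst color_eq; simp add: neg_crossing_colors_def col_a_def col_b_def col_m_def Let_def)+
  show "N \<noteq> 0" "P \<noteq> 0" "Q \<noteq> 0"
    using assms(6,7) by (auto simp: c1' c2' nonzero_color_triple)
  then show "c1' = (a1 * m1 * b1 * a2 / N, Q / m1, m1)"
    and "c2' = (N / (m1 * b1), b1 * m1 * a1 * b2 / P, m2)"
    using nz by (simp_all add: c1' c2' field_simps)
qed

lemma neg_crossing_matrix_identities:
  fixes a1 b1 m1 a2 b2 m2 :: complex
  defines "N \<equiv> m1 * b1 * a2 - b2 * (1 - m1 * a1) * (a2 - m2)"
    and "P \<equiv> m1 * a1 * b2 - b2 + m1 * b1"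
    and "Q \<equiv> m2 * b2 - a2 * (b2 - m1 * b1)"
  assumes nonzero: "a1 \<noteq> 0" "b1 \<noteq> 0" "m1 \<noteq> 0" "a2 \<noteq> 0" "b2 \<noteq> 0" "m2 \<noteq> 0"
    and denominators: "N \<noteq> 0" "P \<noteq> 0" "Q \<noteq> 0"
  shows "Umat (a1, b1, m1) ** Umat (a2, b2, m2) =
           Umat (N / (m1 * b1), b1 * m1 * a1 * b2 / P, m2) ** Umat (a1 * m1 * b1 * a2 / N, Q / m1, m1)"
    and "Dmat (a1, b1, m1) ** Dmat (a2, b2, m2) =
           Dmat (N / (m1 * b1), b1 * m1 * a1 * b2 / P, m2) ** Dmat (a1 * m1 * b1 * a2 / N, Q / m1, m1)"
    and "Umat (a1, b1, m1) ** Dmat (a2, b2, m2) =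
           Dmat (N / (m1 * b1), b1 * m1 * a1 * b2 / P, m2) ** Umat (a1 * m1 * b1 * a2 / N, Q / m1, m1)"
  unfolding Umat_triple Dmat_triple mat2_mult mat2_eq_iff
  by (simp_all add: field_simps nonzero denominators) (unfold N_def P_def Q_def; algebra)+

lemma neg_crossing_relations:
  assumes "nonzero_color c1" "nonzero_color c2" "nonzero_color c1'" "nonzero_color c2'"
    and "neg_crossing_colors c1 c2 c1' c2'"
  shows "Umat c1 ** Umat c2 = Umat c2' ** Umat c1'"
    and "Dmat c1 ** Dmat c2 = Dmat c2' ** Dmat c1'"
    and "Umat c1 ** Dmat c2 = Dmat c2' ** Umat c1'"
proof -
  obtain a1 b1 m1 a2 b2 m2 where c1: "c1 = (a1, b1, m1)" and c2: "c2 = (a2, b2, m2)"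
    using prod_cases3 by metis
  note solved = neg_crossing_colors_solved[OF assms[unfolded c1 c2]]
  have "a1 \<noteq> 0" "b1 \<noteq> 0" "m1 \<noteq> 0" "a2 \<noteq> 0" "b2 \<noteq> 0" "m2 \<noteq> 0"
    using assms(1,2) by (simp_all add: c1 c2 nonzero_color_triple)
  from neg_crossing_matrix_identities[OF this solved(1-3)]
  show "Umat c1 ** Umat c2 = Umat c2' ** Umat c1'"
    and "Dmat c1 ** Dmat c2 = Dmat c2' ** Dmat c1'"
    and "Umat c1 ** Dmat c2 = Dmat c2' ** Umat c1'"
    by (simp_all add: c1 c2 solved(4,5))
qed

theorem lemma3p3:
  fixes c1 c2 c1' c2' :: color and positive :: bool
  assumes "nonzero_color c1" "nonzero_color c2"
      and "nonzero_color c1'" "nonzero_color c2'"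
      and "if positive then pos_crossing_colors c1 c2 c1' c2'
           else neg_crossing_colors c1 c2 c1' c2'"
  shows "Umat c1 ** Umat c2 = Umat c2' ** Umat c1'
       \<and> Dmat c1 ** Dmat c2 = Dmat c2' ** Dmat c1'
       \<and> (positive \<longrightarrow> Dmat c1 ** Umat c2 = Umat c2' ** Dmat c1')
       \<and> (\<not> positive \<longrightarrow> Umat c1 ** Dmat c2 = Dmat c2' ** Umat c1')
       \<and> (\<forall>c\<in>{c1, c2, c1', c2'}. invertible (Umat c) \<and> invertible (Dmat c))"
proof -
  have invertible: "\<forall>c\<in>{c1, c2, c1', c2'}. invertible (Umat c) \<and> invertible (Dmat c)"
    using assms(1-4) by (auto simp: nonzero_color_def invertible_Umat invertible_Dmat)
  show ?thesis
  proof (cases positive)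
    case True
    then show ?thesis using pos_crossing_relations[OF assms(1-4)] assms(5) invertible by simp
  next
    case False
    then show ?thesis using neg_crossing_relations[OF assms(1-4)] assms(5) invertible by simp
  qed
qed

end
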